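(* Assume (A) holds. There exists a constant $c>0$ depending only on the data of (A) such that for every $T>0$, all $t\in[-T,T]$ and all $\mathbf{p}\in\mathbb{R}^N$: $$\int_0^1\int_{\mathbb{S}^{d-1}}|\langle\mathbb{M}_t\mathbf{p},e^{vA}B\sigma\mathbf{s}\rangle|^\alpha\mu(d\mathbf{s})\,dv\ge c|\mathbb{M}_t\mathbf{p}|^\alpha.$$
   Context: Setting: $1\le d<N$, $n\ge1$, $d_1=d\ge\dots\ge d_n>0$, $N=\sum_id_i$; $\alpha\in(0,2)$; $\mu$ is the spectral measure on $\mathbb{S}^{d-1}$ of a symmetric $\alpha$-stable Lévy measure on $\mathbb{R}^d$. Assumption (A): (UE) $\sigma\in\mathbb{R}^{d\times d}$ with $\kappa^{-1}|x|^2\le\langle\sigma\sigma^*x,x\rangle\le\kappa|x|^2$; (ND) $\eta^{-1}|\lambda|^\alpha\le\int_{\mathbb{S}^{d-1}}|\langle\lambda,s\rangle|^\alpha\mu(ds)\le\eta|\lambda|^\alpha$ for all $\lambda\in\mathbb{R}^d$; (H) $A\in\mathbb{R}^{N\times N}$ is a block matrix whose only nonzero blocks are $A_{i,i-1}\in\mathbb{R}^{d_i\times d_{i-1}}$, $i=2,\dots,n$, each of rank $d_i$. $B=(I_{d\times d},0,\dots,0)^T\in\mathbb{R}^{N\times d}$. $\mathbb{M}_t=\mathrm{diag}(I_{d_1\times d_1},tI_{d_2\times d_2},\dots,t^{n-1}I_{d_n\times d_n})$. *)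

theory Defs
  imports "HOL-Analysis.Analysis"
begin

text \<open>Vectors of R^m are functions nat => real (only coordinates < m matter);
  matrices are functions nat => nat => real (entries with indices < m matter).\<close>

definition inner_n :: "nat \<Rightarrow> (nat \<Rightarrow> real) \<Rightarrow> (nat \<Rightarrow> real) \<Rightarrow> real" where
  "inner_n m x y = (\<Sum>i<m. x i * y i)"

definition norm_n :: "nat \<Rightarrow> (nat \<Rightarrow> real) \<Rightarrow> real" where
  "norm_n m x = sqrt (\<Sum>i<m. (x i)\<^sup>2)"

definition mat_vec :: "nat \<Rightarrow> (nat \<Rightarrow> nat \<Rightarrow> real) \<Rightarrow> (nat \<Rightarrow> real) \<Rightarrow> (nat \<Rightarrow> real)" where
  "mat_vec m X x = (\<lambda>i. if i < m then (\<Sum>k<m. X i k * x k) else 0)"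

definition mat_mult :: "nat \<Rightarrow> (nat \<Rightarrow> nat \<Rightarrow> real) \<Rightarrow> (nat \<Rightarrow> nat \<Rightarrow> real) \<Rightarrow> (nat \<Rightarrow> nat \<Rightarrow> real)" where
  "mat_mult m X Y = (\<lambda>i j. if i < m \<and> j < m then (\<Sum>k<m. X i k * Y k j) else 0)"

definition mat_id :: "nat \<Rightarrow> nat \<Rightarrow> nat \<Rightarrow> real" where
  "mat_id m = (\<lambda>i j. if i = j \<and> i < m then 1 else 0)"

fun mat_pow :: "nat \<Rightarrow> (nat \<Rightarrow> nat \<Rightarrow> real) \<Rightarrow> nat \<Rightarrow> (nat \<Rightarrow> nat \<Rightarrow> real)" where
  "mat_pow m X 0 = mat_id m"
| "mat_pow m X (Suc k) = mat_mult m (mat_pow m X k) X"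

definition mat_exp :: "nat \<Rightarrow> (nat \<Rightarrow> nat \<Rightarrow> real) \<Rightarrow> (nat \<Rightarrow> nat \<Rightarrow> real)" where
  "mat_exp m X = (\<lambda>i j. \<Sum>k. mat_pow m X k i j / fact k)"

definition mat_scale :: "real \<Rightarrow> (nat \<Rightarrow> nat \<Rightarrow> real) \<Rightarrow> (nat \<Rightarrow> nat \<Rightarrow> real)" where
  "mat_scale v X = (\<lambda>i j. v * X i j)"

text \<open>Block structure: ds = [d_1,...,d_n] (0-indexed list); block i (0-based) occupies
  coordinates off i ..< off (i+1).\<close>
definition off :: "nat list \<Rightarrow> nat \<Rightarrow> nat" where
  "off ds i = sum_list (take i ds)"

definition in_block :: "nat list \<Rightarrow> nat \<Rightarrow> nat \<Rightarrow> bool" where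
  "in_block ds i j \<longleftrightarrow> i < length ds \<and> off ds i \<le> j \<and> j < off ds (Suc i)"

definition blk :: "nat list \<Rightarrow> nat \<Rightarrow> nat" where
  "blk ds j = (LEAST i. j < off ds (Suc i))"

text \<open>M_t = diag(I, t I, ..., t^(n-1) I).\<close>
definition Mt :: "nat list \<Rightarrow> real \<Rightarrow> (nat \<Rightarrow> real) \<Rightarrow> (nat \<Rightarrow> real)" where
  "Mt ds t p = (\<lambda>j. if j < sum_list ds then t ^ blk ds j * p j else 0)"

definition B_sigma :: "nat \<Rightarrow> (nat \<Rightarrow> nat \<Rightarrow> real) \<Rightarrow> (nat \<Rightarrow> real) \<Rightarrow> (nat \<Rightarrow> real)" where
  "B_sigma d \<sigma> s = (\<lambda>j. if j < d then (\<Sum>k<d. \<sigma> j k * s k) else 0)"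

definition sphere_n :: "nat \<Rightarrow> (nat \<Rightarrow> real) set" where
  "sphere_n d = {s. (\<forall>i\<ge>d. s i = 0) \<and> norm_n d s = 1}"

text \<open>Hypothesis (H): only the blocks A_{i,i-1} are nonzero, and each has rank d_i
  (full row rank: its d_i rows are linearly independent).\<close>
definition hyp_H :: "nat list \<Rightarrow> (nat \<Rightarrow> nat \<Rightarrow> real) \<Rightarrow> bool" where
  "hyp_H ds A \<longleftrightarrow>
     (\<forall>j k. A j k \<noteq> 0 \<longrightarrow> j < sum_list ds \<and> k < sum_list ds \<and> blk ds j = Suc (blk ds k)) \<and>
     (\<forall>i. 1 \<le> i \<and> i < length ds \<longrightarrow>
        (\<forall>a :: nat \<Rightarrow> real.
           (\<forall>k. in_block ds (i - 1) k \<longrightarrow> (\<Sum>j\<in>{off ds i..<off ds (Suc i)}. a j * A j k) = 0)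
           \<longrightarrow> (\<forall>j. in_block ds i j \<longrightarrow> a j = 0)))"

definition hyp_UE :: "nat \<Rightarrow> real \<Rightarrow> (nat \<Rightarrow> nat \<Rightarrow> real) \<Rightarrow> bool" where
  "hyp_UE d \<kappa> \<sigma> \<longleftrightarrow> (\<forall>x :: nat \<Rightarrow> real.
      (norm_n d x)\<^sup>2 / \<kappa> \<le> (\<Sum>i<d. \<Sum>j<d. (\<Sum>k<d. \<sigma> i k * \<sigma> j k) * x j * x i) \<and>
      (\<Sum>i<d. \<Sum>j<d. (\<Sum>k<d. \<sigma> i k * \<sigma> j k) * x j * x i) \<le> \<kappa> * (norm_n d x)\<^sup>2)"

definition hyp_ND :: "nat \<Rightarrow> real \<Rightarrow> real \<Rightarrow> (nat \<Rightarrow> real) measure \<Rightarrow> bool" where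
  "hyp_ND d \<alpha> \<eta> \<mu> \<longleftrightarrow> (\<forall>lam :: nat \<Rightarrow> real.
      ennreal ((norm_n d lam) powr \<alpha> / \<eta>) \<le> (\<integral>\<^sup>+ s. ennreal (\<bar>inner_n d lam s\<bar> powr \<alpha>) \<partial>\<mu>) \<and>
      (\<integral>\<^sup>+ s. ennreal (\<bar>inner_n d lam s\<bar> powr \<alpha>) \<partial>\<mu>) \<le> ennreal (\<eta> * (norm_n d lam) powr \<alpha>))"

definition spectral_measure :: "nat \<Rightarrow> (nat \<Rightarrow> real) measure \<Rightarrow> bool" where
  "spectral_measure d \<mu> \<longleftrightarrow> sets \<mu> = sets (restrict_space borel (sphere_n d)) \<and>
     finite_measure \<mu> \<and>
     (\<forall>E\<in>sets \<mu>. uminus ` E \<in> sets \<mu> \<and> emeasure \<mu> (uminus ` E) = emeasure \<mu> E)"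

end

theory Submission
  imports Defs "HOL-Computational_Algebra.Polynomial"
begin

text \<open>Under (H) the matrix A is nilpotent along the block chain, so the first-block part of the
  row vector q^T exp(vA) is a polynomial in v of degree below n, and the rank condition in (H)
  lets a vanishing of this polynomial propagate down the chain to q = 0. A polynomial of degree
  below n that vanishes at one point of each of the n disjoint intervals [i/n, (i+1/2)/n] is zero;
  hence, by compactness in (q, sample points), every q admits one of these intervals on which the
  first-block part has squared norm at least c0 |q|^2. On that interval (UE) and (ND) bound the
  spectral integral below by a multiple of |q|^alpha. This holds for every q, in particular for
  q = M_t p.\<close>

lemma poly_coeffs_eq_0_if_distinct_roots:
  fixes c x :: "nat \<Rightarrow> real"
  assumes inj: "inj_on x {..<n}" and roots: "\<And>i. i < n \<Longrightarrow> (\<Sum>k<n. c k * x i ^ k) = 0"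
    and k: "k < n"
  shows "c k = 0"
proof -
  define p where "p = (\<Sum>k<n. monom (c k) k)"
  have coeff_p: "coeff p i = (if i < n then c i else 0)" for i
    by (simp add: p_def coeff_sum)
  show ?thesis
  proof (cases "p = 0")
    case True
    then show ?thesis
      using coeff_p[of k] k by simp
  next
    case False
    have "x ` {..<n} \<subseteq> {y. poly p y = 0}"
      using roots by (auto simp: p_def poly_sum poly_monom)
    then have "card (x ` {..<n}) \<le> card {y. poly p y = 0}"
      by (intro card_mono poly_roots_finite False)
    also have "\<dots> \<le> degree p"
      by (rule card_poly_roots_bound[OF False])
    finally have "n \<le> degree p"
      using card_image[OF inj] by simp
    moreover have "degree p < n"
      using k degree_le[of "n - 1" p] coeff_p by (cases n) auto
    ultimately show ?thesis
      by simp
  qed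
qed

lemma compact_Pi_UNIV:
  fixes S :: "'a \<Rightarrow> real set"
  assumes "\<And>j. compact (S j)"
  shows "compact (Pi UNIV S)"
proof -
  have "compactin (product_topology (\<lambda>i. euclidean) UNIV) (PiE UNIV S)"
    using assms by (simp add: compactin_PiE)
  then show ?thesis
    by (simp add: euclidean_product_topology PiE_UNIV_domain)
qed

lemma compact_attains_positive_lower_bound:
  fixes G :: "'a::topological_space \<Rightarrow> real"
  assumes "compact K" "continuous_on K G" "\<And>z. z \<in> K \<Longrightarrow> G z > 0"
  shows "\<exists>c>0. \<forall>z\<in>K. c \<le> G z"
proof (cases "K = {}")
  case False
  with continuous_attains_inf[OF assms(1) False assms(2)]
  obtain z0 where "z0 \<in> K" "\<forall>z\<in>K. G z0 \<le> G z"
    by blast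
  with assms(3) show ?thesis
    by blast
qed (auto intro: exI[of _ 1])

lemma set_nn_integral_ge_const:
  assumes "J \<in> sets lborel" "J \<subseteq> S" "\<And>v. v \<in> J \<Longrightarrow> a \<le> F v"
  shows "a * emeasure lborel J \<le> (\<integral>\<^sup>+ v\<in>S. F v \<partial>lborel)"
proof -
  have "a * emeasure lborel J = (\<integral>\<^sup>+ v. a * indicator J v \<partial>lborel)"
    using assms(1) by (rule nn_integral_cmult_indicator[symmetric])
  also have "\<dots> \<le> (\<integral>\<^sup>+ v\<in>S. F v \<partial>lborel)"
    using assms(2,3) by (intro nn_integral_mono) (auto split: split_indicator)
  finally show ?thesis .
qed

lemma off_Suc: "off ds (Suc i) = off ds i + (if i < length ds then ds ! i else 0)"
  by (simp add: off_def take_Suc_conv_app_nth)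

lemma off_0 [simp]: "off ds 0 = 0"
  by (simp add: off_def)

lemma off_eq_sum_list: "length ds \<le> i \<Longrightarrow> off ds i = sum_list ds"
  by (simp add: off_def)

lemma off_mono: "i \<le> i' \<Longrightarrow> off ds i \<le> off ds i'"
  by (rule lift_Suc_mono_le[of "off ds"]) (auto simp: off_Suc)

lemma in_block_blk:
  assumes "j < sum_list ds"
  shows "blk ds j < length ds" "in_block ds (blk ds j) j"
proof -
  have ex: "j < off ds (Suc (length ds - 1))"
    using assms off_eq_sum_list[of ds "Suc (length ds - 1)"] by simp
  have upper: "j < off ds (Suc (blk ds j))"
    unfolding blk_def by (rule LeastI, rule ex)
  have "blk ds j \<le> length ds - 1"
    unfolding blk_def by (rule Least_le, rule ex)
  moreover have "ds \<noteq> []"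
    using assms by auto
  ultimately show "blk ds j < length ds"
    by (cases ds) auto
  have "off ds (blk ds j) \<le> j"
  proof (cases "blk ds j")
    case (Suc i)
    then have "\<not> j < off ds (Suc i)"
      unfolding blk_def by (metis lessI not_less_Least)
    then show ?thesis
      using Suc by simp
  qed simp
  with \<open>blk ds j < length ds\<close> upper show "in_block ds (blk ds j) j"
    by (simp add: in_block_def)
qed

lemma blk_eqI:
  assumes "in_block ds i j"
  shows "blk ds j = i"
proof -
  have j: "off ds i \<le> j" "j < off ds (Suc i)"
    using assms by (auto simp: in_block_def)
  have "blk ds j \<le> i"
    unfolding blk_def by (rule Least_le, rule j(2))
  moreover have "j < off ds (Suc (blk ds j))"
    unfolding blk_def by (rule LeastI, rule j(2))
  ultimately show ?thesis
    using j off_mono[of "Suc (blk ds j)" i ds] by (cases "blk ds j = i") auto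
qed

lemma in_block_less_sum_list: "in_block ds i j \<Longrightarrow> j < sum_list ds"
  using off_mono[of "Suc i" "length ds" ds] off_eq_sum_list[of ds "length ds"]
  by (auto simp: in_block_def)

lemma in_block_iff_blk: "j < sum_list ds \<Longrightarrow> in_block ds i j \<longleftrightarrow> blk ds j = i"
  using in_block_blk blk_eqI by metis

lemma in_block_0_iff: "ds \<noteq> [] \<Longrightarrow> in_block ds 0 j \<longleftrightarrow> j < ds ! 0"
  by (cases ds) (auto simp: in_block_def off_Suc)

lemma in_block_iff_atLeastLessThan:
  "i < length ds \<Longrightarrow> in_block ds i j \<longleftrightarrow> j \<in> {off ds i..<off ds (Suc i)}"
  by (auto simp: in_block_def)

subsection \<open>Nilpotency and the rank chain\<close>

lemma mat_pow_nonzero_imp_blk: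
  assumes H: "hyp_H ds A" and "mat_pow (sum_list ds) A k j m \<noteq> 0"
  shows "j < sum_list ds \<and> m < sum_list ds \<and> blk ds j = blk ds m + k"
  using assms(2)
proof (induction k arbitrary: j m)
  case 0
  then show ?case
    by (auto simp: mat_id_def split: if_splits)
next
  case (Suc k)
  then have jm: "j < sum_list ds" "m < sum_list ds"
    and "(\<Sum>r<sum_list ds. mat_pow (sum_list ds) A k j r * A r m) \<noteq> 0"
    by (auto simp: mat_mult_def split: if_splits)
  from sum.not_neutral_contains_not_neutral[OF this(3)]
  obtain r where r: "mat_pow (sum_list ds) A k j r \<noteq> 0" "A r m \<noteq> 0"
    by auto
  have "blk ds r = Suc (blk ds m)"
    using H r(2) unfolding hyp_H_def by blast
  with Suc.IH[OF r(1)] jm show ?case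
    by simp
qed

lemma mat_pow_eq_0_if_length_le:
  assumes "hyp_H ds A" and "length ds \<le> k"
  shows "mat_pow (sum_list ds) A k j m = 0"
proof (rule ccontr)
  assume "mat_pow (sum_list ds) A k j m \<noteq> 0"
  from mat_pow_nonzero_imp_blk[OF assms(1) this] in_block_blk(1)[of j ds] assms(2)
  show False
    by auto
qed

lemma mat_pow_mat_scale: "mat_pow M (mat_scale v X) k j m = v ^ k * mat_pow M X k j m"
proof (induction k arbitrary: m)
  case (Suc k)
  then show ?case
    by (simp add: mat_mult_def mat_scale_def sum_distrib_left mult_ac)
qed (simp add: mat_id_def)

lemma mat_exp_mat_scale_eq_sum:
  assumes "hyp_H ds A"
  shows "mat_exp (sum_list ds) (mat_scale v A) j m
       = (\<Sum>k<length ds. v ^ k / fact k * mat_pow (sum_list ds) A k j m)"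
proof -
  have "mat_exp (sum_list ds) (mat_scale v A) j m
      = (\<Sum>k. v ^ k / fact k * mat_pow (sum_list ds) A k j m)"
    by (simp add: mat_exp_def mat_pow_mat_scale)
  also have "\<dots> = (\<Sum>k<length ds. v ^ k / fact k * mat_pow (sum_list ds) A k j m)"
    by (rule suminf_finite) (auto simp: mat_pow_eq_0_if_length_le[OF assms])
  finally show ?thesis .
qed

lemma hyp_H_block_rows_independent:
  assumes H: "hyp_H ds A" and r: "Suc r < length ds"
    and vanish: "\<And>m. in_block ds r m \<Longrightarrow> (\<Sum>s<sum_list ds. c s * A s m) = 0"
    and s: "in_block ds (Suc r) s"
  shows "c s = 0"
proof -
  let ?B = "{off ds (Suc r)..<off ds (Suc (Suc r))}"
  have "(\<Sum>s'\<in>?B. c s' * A s' m) = 0" if m: "in_block ds r m" for m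
  proof -
    have "(\<Sum>s'<sum_list ds. c s' * A s' m) = (\<Sum>s'\<in>?B. c s' * A s' m)"
    proof (rule sum.mono_neutral_right)
      show "?B \<subseteq> {..<sum_list ds}"
        using in_block_less_sum_list in_block_iff_atLeastLessThan[OF r] by blast
      show "\<forall>s'\<in>{..<sum_list ds} - ?B. c s' * A s' m = 0"
      proof
        fix s' assume s': "s' \<in> {..<sum_list ds} - ?B"
        have "A s' m = 0"
        proof (rule ccontr)
          assume "A s' m \<noteq> 0"
          then have "blk ds s' = Suc (blk ds m)"
            using H unfolding hyp_H_def by blast
          then have "in_block ds (Suc r) s'"
            using s' blk_eqI[OF m] in_block_iff_blk by auto
          then show False
            using s' in_block_iff_atLeastLessThan[OF r] by blast
        qed
        then show "c s' * A s' m = 0"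
          by simp
      qed
    qed simp
    with vanish[OF m] show ?thesis
      by simp
  qed
  moreover have "1 \<le> Suc r \<and> Suc r < length ds"
    using r by simp
  ultimately show ?thesis
    using H s unfolding hyp_H_def by (metis diff_Suc_1)
qed

lemma mat_pow_combination_vanishes_imp_zero:
  assumes H: "hyp_H ds A"
  shows "r + k < length ds \<Longrightarrow>
    (\<And>m. in_block ds r m \<Longrightarrow> (\<Sum>j<sum_list ds. a j * mat_pow (sum_list ds) A k j m) = 0) \<Longrightarrow>
    in_block ds (r + k) j \<Longrightarrow> a j = 0"
proof (induction k arbitrary: r)
  case 0
  have "(\<Sum>j'<sum_list ds. a j' * mat_pow (sum_list ds) A 0 j' j)
      = (\<Sum>j'<sum_list ds. if j' = j then a j else 0)"
    by (rule sum.cong) (auto simp: mat_id_def)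
  also have "\<dots> = a j"
    using in_block_less_sum_list[OF "0.prems"(3)] by simp
  finally show ?case
    using "0.prems" by simp
next
  case (Suc k)
  let ?N = "sum_list ds"
  define c where "c s = (\<Sum>j<?N. a j * mat_pow ?N A k j s)" for s
  \<comment> \<open>c = a^T A^k, and c^T A = a^T A^(k+1) vanishes on block r, so the rank condition of (H)
    kills c on block r + 1; the induction hypothesis at r + 1 then applies.\<close>
  have "c s = 0" if "in_block ds (Suc r) s" for s
  proof (rule hyp_H_block_rows_independent[OF H _ _ that])
    show "Suc r < length ds"
      using Suc.prems(1) by simp
    fix m assume m: "in_block ds r m"
    have "(\<Sum>s<?N. c s * A s m) = (\<Sum>j<?N. \<Sum>s<?N. a j * mat_pow ?N A k j s * A s m)"
      unfolding c_def sum_distrib_right by (rule sum.swap)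
    also have "\<dots> = (\<Sum>j<?N. a j * mat_pow ?N A (Suc k) j m)"
      using in_block_less_sum_list[OF m]
      by (intro sum.cong) (auto simp: mat_mult_def sum_distrib_left mult.assoc)
    finally show "(\<Sum>s<?N. c s * A s m) = 0"
      using Suc.prems(2)[OF m] by simp
  qed
  then show ?case
    using Suc.IH[of "Suc r"] Suc.prems by (simp add: c_def)
qed

lemma first_block_columns_vanish_imp_zero:
  assumes H: "hyp_H ds A" and ne: "ds \<noteq> []"
    and vanish: "\<And>k l. k < length ds \<Longrightarrow> l < ds ! 0 \<Longrightarrow>
      (\<Sum>j<sum_list ds. q j * mat_pow (sum_list ds) A k j l) = 0"
    and j: "j < sum_list ds"
  shows "q j = 0"
  using mat_pow_combination_vanishes_imp_zero[OF H, of 0 "blk ds j" q j]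
    in_block_blk[OF j] in_block_0_iff[OF ne] vanish
  by simp

subsection \<open>Coercivity of the exponential row\<close>

definition sample_interval :: "nat \<Rightarrow> nat \<Rightarrow> real set" where
  "sample_interval n i = {real i / real n .. (real i + 1/2) / real n}"

lemma sample_interval_less:
  assumes "i < i'" "x \<in> sample_interval n i" "y \<in> sample_interval n i'" "n > 0"
  shows "x < y"
proof -
  have "x \<le> (real i + 1/2) / real n"
    using assms(2) by (simp add: sample_interval_def)
  also have "\<dots> < real i' / real n"
    using assms(1,4) by (intro divide_strict_right_mono) auto
  also have "\<dots> \<le> y"
    using assms(3) by (simp add: sample_interval_def)
  finally show ?thesis .
qed

lemma sample_interval_subset: "i < n \<Longrightarrow> sample_interval n i \<subseteq> {0..1}"
  by (auto simp: sample_interval_def field_simps)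

lemma emeasure_sample_interval:
  assumes "n > 0"
  shows "emeasure lborel (sample_interval n i) = ennreal (1 / (2 * n))"
proof -
  have "(real i + 1/2) / real n - real i / real n = 1 / (2 * n)"
    using assms by (simp add: field_simps)
  then show ?thesis
    using assms by (simp add: sample_interval_def emeasure_lborel_Icc divide_right_mono)
qed

definition exp_row :: "nat list \<Rightarrow> (nat \<Rightarrow> nat \<Rightarrow> real) \<Rightarrow> (nat \<Rightarrow> real) \<Rightarrow> real \<Rightarrow> nat \<Rightarrow> real" where
  "exp_row ds A q v l = (\<Sum>j<sum_list ds. q j * mat_exp (sum_list ds) (mat_scale v A) j l)"

lemma exp_row_eq_poly:
  assumes "hyp_H ds A"
  shows "exp_row ds A q v l = (\<Sum>k<length ds.
    ((\<Sum>j<sum_list ds. q j * mat_pow (sum_list ds) A k j l) / fact k) * v ^ k)"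
  unfolding exp_row_def mat_exp_mat_scale_eq_sum[OF assms]
  by (simp add: sum_distrib_left sum_divide_distrib sum_distrib_right algebra_simps
      sum.swap[of _ "{..<length ds}"])

lemma exp_row_cong:
  "(\<And>j. j < sum_list ds \<Longrightarrow> q j = q' j) \<Longrightarrow> exp_row ds A q v l = exp_row ds A q' v l"
  by (simp add: exp_row_def)

lemma exp_row_divide: "exp_row ds A (\<lambda>j. q j / r) v l = exp_row ds A q v l / r"
  by (simp add: exp_row_def sum_divide_distrib)

lemma exp_row_vanishing_at_samples_imp_zero:
  assumes H: "hyp_H ds A" and ne: "ds \<noteq> []"
    and x: "\<And>i. i < length ds \<Longrightarrow> x i \<in> sample_interval (length ds) i"
    and vanish: "\<And>i l. i < length ds \<Longrightarrow> l < ds ! 0 \<Longrightarrow> exp_row ds A q (x i) l = 0"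
    and j: "j < sum_list ds"
  shows "q j = 0"
proof (rule first_block_columns_vanish_imp_zero[OF H ne _ j])
  let ?n = "length ds"
  have "x i < x i'" if "i < i'" "i' < ?n" for i i'
    using sample_interval_less[OF that(1) x x] that ne by simp
  then have inj: "inj_on x {..<?n}"
    by (metis inj_onI lessThan_iff linorder_neqE_nat order_less_irrefl)
  fix k l assume k: "k < ?n" and l: "l < ds ! 0"
  have "(\<Sum>j<sum_list ds. q j * mat_pow (sum_list ds) A k j l) / fact k = 0"
    by (rule poly_coeffs_eq_0_if_distinct_roots[OF inj _ k])
      (use vanish l in \<open>simp add: exp_row_eq_poly[OF H]\<close>)
  then show "(\<Sum>j<sum_list ds. q j * mat_pow (sum_list ds) A k j l) = 0"
    by simp
qed

lemma continuous_on_sum_exp_row_squares: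
  fixes K :: "((nat \<Rightarrow> real) \<times> (nat \<Rightarrow> real)) set"
  assumes H: "hyp_H ds A"
  shows "continuous_on K (\<lambda>z. \<Sum>i<n. \<Sum>l<ds ! 0. (exp_row ds A (fst z) (snd z i) l)\<^sup>2)"
proof -
  have coordinates: "continuous_on K (\<lambda>z. fst z j)" "continuous_on K (\<lambda>z. snd z j)" for j
    by (rule continuous_on_product_then_coordinatewise, intro continuous_intros)+
  show ?thesis
    unfolding exp_row_eq_poly[OF H] by (intro continuous_intros coordinates) auto
qed

lemma sum_exp_row_samples_pos:
  assumes H: "hyp_H ds A" and ne: "ds \<noteq> []"
    and q: "(\<Sum>j<sum_list ds. (q j)\<^sup>2) = 1"
    and x: "\<And>i. i < length ds \<Longrightarrow> x i \<in> sample_interval (length ds) i"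
  shows "0 < (\<Sum>i<length ds. \<Sum>l<ds ! 0. (exp_row ds A q (x i) l)\<^sup>2)"
proof (rule ccontr)
  assume "\<not> ?thesis"
  then have zero: "(\<Sum>i<length ds. \<Sum>l<ds ! 0. (exp_row ds A q (x i) l)\<^sup>2) = 0"
    by (simp add: sum_nonneg order.strict_iff_order)
  have "exp_row ds A q (x i) l = 0" if "i < length ds" "l < ds ! 0" for i l
  proof -
    have "(\<Sum>l<ds ! 0. (exp_row ds A q (x i) l)\<^sup>2) = 0"
      using zero that by (subst (asm) sum_nonneg_eq_0_iff) (auto intro!: sum_nonneg)
    then show ?thesis
      using that by (subst (asm) sum_nonneg_eq_0_iff) auto
  qed
  then have "q j = 0" if "j < sum_list ds" for j
    using exp_row_vanishing_at_samples_imp_zero[OF H ne x] that by blast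
  then show False
    using q by simp
qed

lemma exp_row_uniform_lower_bound:
  assumes H: "hyp_H ds A" and ne: "ds \<noteq> []"
  shows "\<exists>c>0. \<forall>q x. (\<Sum>j<sum_list ds. (q j)\<^sup>2) = 1 \<longrightarrow>
    (\<forall>i<length ds. x i \<in> sample_interval (length ds) i) \<longrightarrow>
    c \<le> (\<Sum>i<length ds. \<Sum>l<ds ! 0. (exp_row ds A q (x i) l)\<^sup>2)"
proof -
  let ?N = "sum_list ds" and ?n = "length ds"
  define K where "K = (Pi UNIV (\<lambda>_. {-1..1::real}) \<inter> {q. (\<Sum>j<?N. (q j)\<^sup>2) = 1})
    \<times> Pi UNIV (\<lambda>i. if i < ?n then sample_interval ?n i else {0})"
  define G where "G z = (\<Sum>i<?n. \<Sum>l<ds ! 0. (exp_row ds A (fst z) (snd z i) l)\<^sup>2)" for z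
  have compact: "compact K"
    unfolding K_def
    by (intro compact_Times compact_Int_closed compact_Pi_UNIV closed_Collect_eq continuous_intros)
      (auto simp: sample_interval_def)
  have continuous: "continuous_on K G"
    unfolding G_def by (rule continuous_on_sum_exp_row_squares[OF H])
  have positive: "G z > 0" if z: "z \<in> K" for z
  proof -
    have x: "snd z \<in> Pi UNIV (\<lambda>i. if i < ?n then sample_interval ?n i else {0})"
      and q: "(\<Sum>j<?N. (fst z j)\<^sup>2) = 1"
      using z unfolding K_def by (simp_all add: mem_Times_iff)
    have "snd z i \<in> sample_interval ?n i" if "i < ?n" for i
      using Pi_mem[OF x UNIV_I, of i] that by simp
    then show ?thesis
      unfolding G_def by (rule sum_exp_row_samples_pos[OF H ne q])
  qed
  obtain c where c: "c > 0" "\<forall>z\<in>K. c \<le> G z"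
    using compact_attains_positive_lower_bound[OF compact continuous positive] by blast
  show ?thesis
  proof (intro exI[of _ c] conjI allI impI)
    fix q x :: "nat \<Rightarrow> real"
    assume q: "(\<Sum>j<?N. (q j)\<^sup>2) = 1" and x: "\<forall>i<?n. x i \<in> sample_interval ?n i"
    \<comment> \<open>exp_row only reads q below N and G only reads x below n, so the truncations lie in K.\<close>
    define q' where "q' j = (if j < ?N then q j else 0)" for j
    define x' where "x' i = (if i < ?n then x i else 0)" for i
    have "\<bar>q j\<bar> \<le> 1" if "j < ?N" for j
    proof -
      have "(q j)\<^sup>2 \<le> 1"
        using q member_le_sum[of j "{..<?N}" "\<lambda>j. (q j)\<^sup>2"] that by simp
      then show ?thesis
        using abs_square_le_1 by blast
    qed
    then have "(q', x') \<in> K"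
      using q x unfolding K_def q'_def x'_def by (auto simp: Pi_iff abs_le_iff)
    then have "c \<le> G (q', x')"
      using c(2) by blast
    also have "G (q', x') = (\<Sum>i<?n. \<Sum>l<ds ! 0. (exp_row ds A q (x i) l)\<^sup>2)"
      unfolding G_def using exp_row_cong[of ds q' q] by (simp add: q'_def x'_def)
    finally show "c \<le> \<dots>" .
  qed (fact c(1))
qed

lemma exp_row_coercive:
  assumes H: "hyp_H ds A" and ne: "ds \<noteq> []"
  shows "\<exists>c>0. \<forall>q. \<exists>i<length ds. \<forall>v\<in>sample_interval (length ds) i.
    c * (\<Sum>j<sum_list ds. (q j)\<^sup>2) \<le> (\<Sum>l<ds ! 0. (exp_row ds A q v l)\<^sup>2)"
proof -
  let ?N = "sum_list ds" and ?n = "length ds"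
  obtain c where c: "c > 0" and bound: "\<And>q x. (\<Sum>j<?N. (q j)\<^sup>2) = 1 \<Longrightarrow>
      (\<forall>i<?n. x i \<in> sample_interval ?n i) \<Longrightarrow>
      c \<le> (\<Sum>i<?n. \<Sum>l<ds ! 0. (exp_row ds A q (x i) l)\<^sup>2)"
    using exp_row_uniform_lower_bound[OF H ne] by blast
  have n: "?n > 0"
    using ne by simp
  show ?thesis
  proof (intro exI[of _ "c / ?n"] conjI allI)
    show "c / ?n > 0"
      using c n by simp
    fix q :: "nat \<Rightarrow> real"
    define r2 where "r2 = (\<Sum>j<?N. (q j)\<^sup>2)"
    show "\<exists>i<?n. \<forall>v\<in>sample_interval ?n i. c / ?n * r2 \<le> (\<Sum>l<ds ! 0. (exp_row ds A q v l)\<^sup>2)"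
    proof (rule ccontr)
      assume "\<not> ?thesis"
      then obtain x where x: "\<And>i. i < ?n \<Longrightarrow> x i \<in> sample_interval ?n i"
        and small: "\<And>i. i < ?n \<Longrightarrow> (\<Sum>l<ds ! 0. (exp_row ds A q (x i) l)\<^sup>2) < c / ?n * r2"
        by (simp add: not_le) metis
      have "0 < c / ?n * r2"
        using small[OF n] by (meson le_less_trans sum_nonneg zero_le_power2)
      then have r2: "r2 > 0"
        using c n by (simp add: zero_less_divide_iff zero_less_mult_iff)
      let ?z = "\<lambda>j. q j / sqrt r2"
      have "(\<Sum>j<?N. (?z j)\<^sup>2) = 1"
        using r2 by (simp add: power_divide sum_divide_distrib[symmetric] r2_def[symmetric])
      then have "c \<le> (\<Sum>i<?n. \<Sum>l<ds ! 0. (exp_row ds A ?z (x i) l)\<^sup>2)"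
        using x by (intro bound) auto
      also have "\<dots> = (\<Sum>i<?n. (\<Sum>l<ds ! 0. (exp_row ds A q (x i) l)\<^sup>2) / r2)"
        using r2 by (simp add: exp_row_divide power_divide sum_divide_distrib)
      also have "\<dots> < (\<Sum>i<?n. c / ?n)"
        using small r2 n by (intro sum_strict_mono) (auto simp: divide_less_eq)
      also have "\<dots> = c"
        using n by simp
      finally show False
        by simp
    qed
  qed
qed

subsection \<open>Lower bound for the spectral integral\<close>

lemma norm_n_nonneg: "0 \<le> norm_n m x"
  by (simp add: norm_n_def sum_nonneg)

lemma inner_mat_exp_B_sigma:
  assumes "d \<le> sum_list ds"
  shows "inner_n (sum_list ds) q
      (mat_vec (sum_list ds) (mat_exp (sum_list ds) (mat_scale v A)) (B_sigma d \<sigma> s))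
    = inner_n d (\<lambda>k. \<Sum>m<d. exp_row ds A q v m * \<sigma> m k) s"
proof -
  let ?N = "sum_list ds"
  define E where "E = mat_exp ?N (mat_scale v A)"
  have exp_row_E: "exp_row ds A q v m = (\<Sum>j<?N. q j * E j m)" for m
    by (simp add: exp_row_def E_def)
  have "inner_n ?N q (mat_vec ?N (mat_exp ?N (mat_scale v A)) (B_sigma d \<sigma> s))
      = (\<Sum>j<?N. q j * (\<Sum>m<?N. E j m * B_sigma d \<sigma> s m))"
    unfolding inner_n_def mat_vec_def E_def by (intro sum.cong) auto
  also have "\<dots> = (\<Sum>j<?N. \<Sum>m<d. \<Sum>k<d. q j * E j m * \<sigma> m k * s k)"
  proof -
    have "(\<Sum>m<?N. E j m * B_sigma d \<sigma> s m) = (\<Sum>m<d. E j m * (\<Sum>k<d. \<sigma> m k * s k))" for j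
      by (rule sum.mono_neutral_cong_right) (use assms in \<open>auto simp: B_sigma_def\<close>)
    then show ?thesis
      by (simp add: sum_distrib_left mult.assoc)
  qed
  also have "\<dots> = (\<Sum>m<d. \<Sum>j<?N. \<Sum>k<d. q j * E j m * \<sigma> m k * s k)"
    by (rule sum.swap)
  also have "\<dots> = (\<Sum>m<d. \<Sum>k<d. \<Sum>j<?N. q j * E j m * \<sigma> m k * s k)"
    by (intro sum.cong refl sum.swap)
  also have "\<dots> = (\<Sum>k<d. \<Sum>m<d. \<Sum>j<?N. q j * E j m * \<sigma> m k * s k)"
    by (rule sum.swap)
  also have "\<dots> = inner_n d (\<lambda>k. \<Sum>m<d. exp_row ds A q v m * \<sigma> m k) s"
    unfolding inner_n_def exp_row_E by (simp add: sum_distrib_right)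
  finally show ?thesis .
qed

lemma hyp_UE_transpose_ge:
  assumes "hyp_UE d \<kappa> \<sigma>"
  shows "(\<Sum>l<d. (w l)\<^sup>2) / \<kappa> \<le> (norm_n d (\<lambda>k. \<Sum>m<d. w m * \<sigma> m k))\<^sup>2"
proof -
  have "(\<Sum>i<d. \<Sum>j<d. (\<Sum>k<d. \<sigma> i k * \<sigma> j k) * w j * w i)
      = (\<Sum>i<d. \<Sum>j<d. \<Sum>k<d. (w i * \<sigma> i k) * (w j * \<sigma> j k))"
    by (intro sum.cong refl) (simp add: sum_distrib_left mult_ac)
  also have "\<dots> = (\<Sum>i<d. \<Sum>k<d. \<Sum>j<d. (w i * \<sigma> i k) * (w j * \<sigma> j k))"
    by (intro sum.cong refl sum.swap)
  also have "\<dots> = (\<Sum>k<d. \<Sum>i<d. \<Sum>j<d. (w i * \<sigma> i k) * (w j * \<sigma> j k))"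
    by (rule sum.swap)
  also have "\<dots> = (\<Sum>k<d. (\<Sum>m<d. w m * \<sigma> m k)\<^sup>2)"
    by (simp add: power2_eq_square sum_product)
  also have "\<dots> = (norm_n d (\<lambda>k. \<Sum>m<d. w m * \<sigma> m k))\<^sup>2"
    unfolding norm_n_def by (simp add: sum_nonneg)
  finally have "(\<Sum>i<d. \<Sum>j<d. (\<Sum>k<d. \<sigma> i k * \<sigma> j k) * w j * w i)
      = (norm_n d (\<lambda>k. \<Sum>m<d. w m * \<sigma> m k))\<^sup>2" .
  moreover have "(norm_n d w)\<^sup>2 / \<kappa> \<le> (\<Sum>i<d. \<Sum>j<d. (\<Sum>k<d. \<sigma> i k * \<sigma> j k) * w j * w i)"
    using assms unfolding hyp_UE_def by blast
  moreover have "(norm_n d w)\<^sup>2 = (\<Sum>l<d. (w l)\<^sup>2)"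
    unfolding norm_n_def by (simp add: sum_nonneg)
  ultimately show ?thesis
    by simp
qed

lemma nn_integral_spectral_ge:
  assumes UE: "hyp_UE d \<kappa> \<sigma>" and kappa: "\<kappa> > 0"
    and ND: "hyp_ND d \<alpha> \<eta> \<mu>" and eta: "\<eta> > 0" and alpha: "\<alpha> \<ge> 0"
    and d: "d \<le> sum_list ds" and c0: "c0 \<ge> 0"
    and coercive: "c0 * (\<Sum>j<sum_list ds. (q j)\<^sup>2) \<le> (\<Sum>l<d. (exp_row ds A q v l)\<^sup>2)"
  shows "ennreal ((sqrt (c0 / \<kappa>) * norm_n (sum_list ds) q) powr \<alpha> / \<eta>)
    \<le> (\<integral>\<^sup>+ s. ennreal (\<bar>inner_n (sum_list ds) q
          (mat_vec (sum_list ds) (mat_exp (sum_list ds) (mat_scale v A)) (B_sigma d \<sigma> s))\<bar> powr \<alpha>) \<partial>\<mu>)"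
proof -
  define lam where "lam = (\<lambda>k. \<Sum>m<d. exp_row ds A q v m * \<sigma> m k)"
  have "(sqrt (c0 / \<kappa>) * norm_n (sum_list ds) q)\<^sup>2 = c0 * (\<Sum>j<sum_list ds. (q j)\<^sup>2) / \<kappa>"
    using c0 kappa by (simp add: power_mult_distrib norm_n_def sum_nonneg)
  also have "\<dots> \<le> (\<Sum>l<d. (exp_row ds A q v l)\<^sup>2) / \<kappa>"
    using coercive kappa by (simp add: divide_right_mono)
  also have "\<dots> \<le> (norm_n d lam)\<^sup>2"
    unfolding lam_def by (rule hyp_UE_transpose_ge[OF UE])
  finally have "sqrt (c0 / \<kappa>) * norm_n (sum_list ds) q \<le> norm_n d lam"
    by (rule power2_le_imp_le) (rule norm_n_nonneg)
  then have "(sqrt (c0 / \<kappa>) * norm_n (sum_list ds) q) powr \<alpha> / \<eta> \<le> norm_n d lam powr \<alpha> / \<eta>"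
    using alpha eta c0 kappa by (intro divide_right_mono powr_mono2) (auto simp: norm_n_nonneg)
  also have "ennreal (norm_n d lam powr \<alpha> / \<eta>) \<le> (\<integral>\<^sup>+ s. ennreal (\<bar>inner_n d lam s\<bar> powr \<alpha>) \<partial>\<mu>)"
    using ND unfolding hyp_ND_def by blast
  finally show ?thesis
    unfolding lam_def inner_mat_exp_B_sigma[OF d] by (simp add: ennreal_leI)
qed

lemma nn_integral_mat_exp_B_sigma_ge:
  assumes H: "hyp_H ds A" and ne: "ds \<noteq> []"
    and UE: "hyp_UE (ds ! 0) \<kappa> \<sigma>" and kappa: "\<kappa> > 0"
    and ND: "hyp_ND (ds ! 0) \<alpha> \<eta> \<mu>" and eta: "\<eta> > 0" and alpha: "\<alpha> \<ge> 0"
  shows "\<exists>c>0. \<forall>q. ennreal (c * norm_n (sum_list ds) q powr \<alpha>)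
    \<le> (\<integral>\<^sup>+ v\<in>{0..1}. (\<integral>\<^sup>+ s. ennreal (\<bar>inner_n (sum_list ds) q
          (mat_vec (sum_list ds) (mat_exp (sum_list ds) (mat_scale v A)) (B_sigma (ds ! 0) \<sigma> s))\<bar>
            powr \<alpha>) \<partial>\<mu>) \<partial>lborel)"
proof -
  let ?n = "length ds"
  obtain c0 where c0: "c0 > 0" and coercive: "\<forall>q. \<exists>i<?n. \<forall>v\<in>sample_interval ?n i.
      c0 * (\<Sum>j<sum_list ds. (q j)\<^sup>2) \<le> (\<Sum>l<ds ! 0. (exp_row ds A q v l)\<^sup>2)"
    using exp_row_coercive[OF H ne] by blast
  define K where "K = sqrt (c0 / \<kappa>) powr \<alpha> / \<eta>"
  have K: "K > 0"
    unfolding K_def using c0 kappa eta by simp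
  have n: "?n > 0"
    using ne by simp
  have d: "ds ! 0 \<le> sum_list ds"
    using n by (rule elem_le_sum_list)
  show ?thesis
  proof (intro exI[of _ "K / (2 * ?n)"] conjI allI)
    show "K / (2 * ?n) > 0"
      using K n by simp
    fix q :: "nat \<Rightarrow> real"
    define \<rho> where "\<rho> = norm_n (sum_list ds) q"
    obtain i where i: "i < ?n" and on_interval: "\<forall>v\<in>sample_interval ?n i.
        c0 * (\<Sum>j<sum_list ds. (q j)\<^sup>2) \<le> (\<Sum>l<ds ! 0. (exp_row ds A q v l)\<^sup>2)"
      using coercive by blast
    have "(sqrt (c0 / \<kappa>) * \<rho>) powr \<alpha> / \<eta> = K * \<rho> powr \<alpha>"
      unfolding K_def \<rho>_def using c0 kappa by (simp add: powr_mult norm_n_nonneg)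
    then have pointwise: "ennreal (K * \<rho> powr \<alpha>) \<le> (\<integral>\<^sup>+ s. ennreal (\<bar>inner_n (sum_list ds) q
          (mat_vec (sum_list ds) (mat_exp (sum_list ds) (mat_scale v A)) (B_sigma (ds ! 0) \<sigma> s))\<bar>
            powr \<alpha>) \<partial>\<mu>)" if "v \<in> sample_interval ?n i" for v
      using nn_integral_spectral_ge[OF UE kappa ND eta alpha d, of c0 q A v] c0 on_interval that
      unfolding \<rho>_def by simp
    have "ennreal (K / (2 * ?n) * \<rho> powr \<alpha>)
        = ennreal (K * \<rho> powr \<alpha>) * emeasure lborel (sample_interval ?n i)"
      using K n by (simp add: emeasure_sample_interval ennreal_mult[symmetric])
    also have "\<dots> \<le> (\<integral>\<^sup>+ v\<in>{0..1}. (\<integral>\<^sup>+ s. ennreal (\<bar>inner_n (sum_list ds) q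
          (mat_vec (sum_list ds) (mat_exp (sum_list ds) (mat_scale v A)) (B_sigma (ds ! 0) \<sigma> s))\<bar>
            powr \<alpha>) \<partial>\<mu>) \<partial>lborel)"
      using sample_interval_subset[OF i] pointwise
      by (intro set_nn_integral_ge_const) (auto simp: sample_interval_def)
    finally show "ennreal (K / (2 * ?n) * norm_n (sum_list ds) q powr \<alpha>) \<le> \<dots>"
      unfolding \<rho>_def .
  qed
qed

theorem lemmaA1:
  fixes ds :: "nat list" and d N :: nat and \<alpha> \<kappa> \<eta> :: real
    and \<sigma> A :: "nat \<Rightarrow> nat \<Rightarrow> real" and \<mu> :: "(nat \<Rightarrow> real) measure"
  assumes n_pos: "length ds \<ge> 1"
    and d_def: "d = ds ! 0"
    and N_def: "N = sum_list ds"
    and d_lt: "1 \<le> d" "d < N"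
    and ds_pos: "\<forall>i<length ds. ds ! i > 0"
    and ds_sorted: "sorted_wrt (\<ge>) ds"
    and alpha: "0 < \<alpha>" "\<alpha> < 2"
    and kappa: "\<kappa> > 0" and UE: "hyp_UE d \<kappa> \<sigma>"
    and eta: "\<eta> > 0" and ND: "hyp_ND d \<alpha> \<eta> \<mu>"
    and mu: "spectral_measure d \<mu>"
    and H: "hyp_H ds A"
  shows "\<exists>c>0. \<forall>T>0. \<forall>t\<in>{-T..T}. \<forall>p :: nat \<Rightarrow> real.
     (\<integral>\<^sup>+ v\<in>{0..1}. (\<integral>\<^sup>+ s. ennreal (\<bar>inner_n N (Mt ds t p)
          (mat_vec N (mat_exp N (mat_scale v A)) (B_sigma d \<sigma> s))\<bar> powr \<alpha>) \<partial>\<mu>) \<partial>lborel)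
     \<ge> ennreal (c * (norm_n N (Mt ds t p)) powr \<alpha>)"
proof -
  have "ds \<noteq> []"
    using n_pos by auto
  from nn_integral_mat_exp_B_sigma_ge[OF H this UE[unfolded d_def] kappa ND[unfolded d_def] eta]
  obtain c where "c > 0" and "\<forall>q. ennreal (c * norm_n N q powr \<alpha>)
    \<le> (\<integral>\<^sup>+ v\<in>{0..1}. (\<integral>\<^sup>+ s. ennreal (\<bar>inner_n N q
          (mat_vec N (mat_exp N (mat_scale v A)) (B_sigma d \<sigma> s))\<bar> powr \<alpha>) \<partial>\<mu>) \<partial>lborel)"
    using alpha(1) unfolding N_def d_def by auto
  then show ?thesis
    by blast
qed

end
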